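(* In the standing setup, $$\sum_{i\in\mathcal{N}}\mathrm{len}(\rho^i_{\mathrm{up}})\le 4n^2\qquad\text{and}\qquad\sum_{i\in\mathcal{N}}\mathrm{len}(\rho^i_{\mathrm{down}})\le 4n^2.$$
   Context: $\mathbb{N}=\{0,1,2,\dots\}$. A one-counter system (OCS) $\mathcal{O}$ consists of a finite set $Q$ of states, a set $T_{>0}\subseteq Q\times\{-1,0,1\}\times Q$ of non-zero transitions and a set $T_{=0}\subseteq Q\times\{0,1\}\times Q$ of zero tests. A configuration is a pair $(q,c)\in Q\times\mathbb{N}$ (state $q$, counter value $c$). A transition $t=(p,d,q)$ has source $p$, target $q$, effect $d$; it can be fired in $(p,c)$ if either $t\in T_{>0}$ and $c>0$, or $t\in T_{=0}$ and $c=0$, yielding $(q,c+d)$. A path is a sequence $(\gamma_1,t_1)\cdots(\gamma_m,t_m)$ such that, with some $\gamma_{m+1}$, firing $t_i$ in $\gamma_i$ yields $\gamma_{i+1}$ for all $i\le m$; its source is $\gamma_1$, target $\gamma_{m+1}$, length $\mathrm{len}=m$, configurations appearing on it are $\gamma_1,\dots,\gamma_{m+1}$, intermediate ones are $\gamma_2,\dots,\gamma_m$; its projection is $\mathrm{proj}=t_1\cdots t_m$ and its effect $\mathrm{eff}$ is the sum of the effects of its transitions. A sequence of transitions is consistent if each transition's target is the next one's source. A cycle is a consistent sequence of non-zero transitions starting and ending in the same state (its base state); positive/negative if its effect is positive/negative; simple if no state is visited twice except the base at start and end. The transition multigraph $G$ has vertices $Q$ and an edge $p\to q$ labelled $d$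 for each $(p,d,q)\in T_{>0}$; $\mathfrak{S}$ is the set of its SCCs and $n_S$ the number of states in $S\in\mathfrak{S}$. A cycle is contained in $S$ if all its states lie in $S$; $S$ is positively (negatively) enabled if it contains a positive (negative) cycle. For every positively enabled $S$ a simple positive cycle $\sigma^+_S$ contained in $S$ is fixed, and for every negatively enabled $T$ a simple negative cycle $\sigma^-_T$ contained in $T$. An arc is a path whose source and target have counter value $0$ and whose intermediate configurations have positive counter value. A path is low if all configurations appearing on it have counter value $<5n$, where $n=|Q|$. For $S,T\in\mathfrak{S}$, an arc $\rho$ is $(S,T)$-normal if $\rho=\rho_{\mathrm{pref}}\rho_{\mathrm{up}}\rho_{\mathrm{cap}}\rho_{\mathrm{down}}\rho_{\mathrm{suff}}$ (normal decomposition) with $\rho_{\mathrm{pref}},\rho_{\mathrm{suff}}$ low, $\mathrm{proj}(\rho_{\mathrm{up}})=(\sigma^+_S)^a$, $\mathrm{proj}(\rho_{\mathrm{down}})=(\sigma^-_T)^b$ for some $a,b\in\mathbb{N}$, the source of $\rho_{\mathrm{cap}}$ having the base state of $\sigma^+_S$ and its target the base state of $\sigma^-_T$. Writing $A=\mathrm{eff}(\sigma^+_S)$, $B=-\mathrm{eff}(\sigma^-_T)$, such a decomposition is good if: (iii) $aA\le 2\,\mathrm{len}(\rho_{\mathrm{cap}})+2\,\mathrm{lcm}(A,B)$; (iv) $bB\le 2\,\mathrm{len}(\rho_{\mathrm{cap}})+2\,\mathrm{lcm}(A,B)$; (v) no infix of $\mathrm{proj}(\rho_{\mathrm{cap}})$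 is a cycle with effect divisible by $\gcd(A,B)$; (vi) the target of $\rho_{\mathrm{up}}$ and the source of $\rho_{\mathrm{down}}$ have counter values $>n$; (vii) all configurations appearing on $\rho_{\mathrm{pref}}$ and $\rho_{\mathrm{suff}}$ together are pairwise distinct. Standing setup: $\alpha,\beta$ are configurations with counter value $0$; $\rho=\rho^1\rho^2\cdots\rho^k$ is a path from $\alpha$ to $\beta$ that has the minimum possible number of appearing configurations with counter value $0$ among all paths from $\alpha$ to $\beta$; each $\rho^i$ is an arc; $\{1,\dots,k\}=\mathcal{L}\sqcup\mathcal{N}$ where for $i\in\mathcal{L}$, $\rho^i$ is a low arc of minimum length among all low arcs with the same source and target, and for $i\in\mathcal{N}$, $\rho^i$ is $(S_i,T_i)$-normal for some $S_i,T_i\in\mathfrak{S}$ with a fixed good normal decomposition $\rho^i=\rho^i_{\mathrm{pref}}\rho^i_{\mathrm{up}}\rho^i_{\mathrm{cap}}\rho^i_{\mathrm{down}}\rho^i_{\mathrm{suff}}$. For $S,T\in\mathfrak{S}$: $\mathcal{N}_{(S,T)}=\{i\in\mathcal{N}: (S_i,T_i)=(S,T)\}$, $\mathcal{N}_{(S,\cdot)}=\{i\in\mathcal{N}:S_i=S\}$, $\mathcal{N}_{(\cdot,T)}=\{i\in\mathcal{N}:T_i=T\}$. *)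

theory Defs
  imports Main
begin

type_synonym 'q conf = "'q \<times> nat"
type_synonym 'q trans = "'q \<times> int \<times> 'q"
(* a path: its source configuration and the list of (transition, resulting configuration) *)
type_synonym 'q path = "'q conf \<times> ('q trans \<times> 'q conf) list"

definition ocs :: "'q set \<Rightarrow> 'q trans set \<Rightarrow> 'q trans set \<Rightarrow> bool" where
  "ocs Q Tp Tz \<longleftrightarrow> finite Q \<and> Tp \<subseteq> Q \<times> {-1,0,1} \<times> Q \<and> Tz \<subseteq> Q \<times> {0,1} \<times> Q"

definition tsrc :: "'q trans \<Rightarrow> 'q" where "tsrc t = fst t"
definition teff :: "'q trans \<Rightarrow> int" where "teff t = fst (snd t)"
definition ttgt :: "'q trans \<Rightarrow> 'q" where "ttgt t = snd (snd t)"

definition fires :: "'q trans set \<Rightarrow> 'q trans set \<Rightarrow> 'q trans \<Rightarrow> 'q conf \<Rightarrow> 'q conf \<Rightarrow> bool" where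
  "fires Tp Tz t \<gamma> \<gamma>' \<longleftrightarrow> fst \<gamma> = tsrc t \<and> ((t \<in> Tp \<and> snd \<gamma> > 0) \<or> (t \<in> Tz \<and> snd \<gamma> = 0))
     \<and> fst \<gamma>' = ttgt t \<and> int (snd \<gamma>') = int (snd \<gamma>) + teff t"

definition psrc :: "'q path \<Rightarrow> 'q conf" where "psrc \<rho> = fst \<rho>"
definition pconfs :: "'q path \<Rightarrow> 'q conf list" where "pconfs \<rho> = fst \<rho> # map snd (snd \<rho>)"
definition ptgt :: "'q path \<Rightarrow> 'q conf" where "ptgt \<rho> = last (pconfs \<rho>)"
definition plen :: "'q path \<Rightarrow> nat" where "plen \<rho> = length (snd \<rho>)"
definition proj :: "'q path \<Rightarrow> 'q trans list" where "proj \<rho> = map fst (snd \<rho>)"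
definition eff :: "'q trans list \<Rightarrow> int" where "eff ts = sum_list (map teff ts)"

definition is_path :: "'q trans set \<Rightarrow> 'q trans set \<Rightarrow> 'q path \<Rightarrow> bool" where
  "is_path Tp Tz \<rho> \<longleftrightarrow> (\<forall>i < plen \<rho>. fires Tp Tz (proj \<rho> ! i) (pconfs \<rho> ! i) (pconfs \<rho> ! Suc i))"

definition zeros :: "'q path \<Rightarrow> nat" where
  "zeros \<rho> = length (filter (\<lambda>c. snd c = 0) (pconfs \<rho>))"

definition is_arc :: "'q trans set \<Rightarrow> 'q trans set \<Rightarrow> 'q path \<Rightarrow> bool" where
  "is_arc Tp Tz \<rho> \<longleftrightarrow> is_path Tp Tz \<rho> \<and> plen \<rho> > 0 \<and> snd (psrc \<rho>) = 0 \<and> snd (ptgt \<rho>) = 0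
     \<and> (\<forall>j. 0 < j \<and> j < plen \<rho> \<longrightarrow> snd (pconfs \<rho> ! j) > 0)"

definition low :: "'q set \<Rightarrow> 'q path \<Rightarrow> bool" where
  "low Q \<rho> \<longleftrightarrow> (\<forall>c \<in> set (pconfs \<rho>). snd c < 5 * card Q)"

definition consistent :: "'q trans list \<Rightarrow> bool" where
  "consistent ts \<longleftrightarrow> (\<forall>i. Suc i < length ts \<longrightarrow> ttgt (ts ! i) = tsrc (ts ! Suc i))"

definition is_cycle :: "'q trans set \<Rightarrow> 'q trans list \<Rightarrow> bool" where
  "is_cycle Tp ts \<longleftrightarrow> ts \<noteq> [] \<and> set ts \<subseteq> Tp \<and> consistent ts \<and> ttgt (last ts) = tsrc (hd ts)"

definition simple_cycle :: "'q trans set \<Rightarrow> 'q trans list \<Rightarrow> bool" where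
  "simple_cycle Tp ts \<longleftrightarrow> is_cycle Tp ts \<and> distinct (map tsrc ts)"

definition base :: "'q trans list \<Rightarrow> 'q" where "base ts = tsrc (hd ts)"

definition contained :: "'q trans list \<Rightarrow> 'q set \<Rightarrow> bool" where
  "contained ts S \<longleftrightarrow> set (map tsrc ts) \<subseteq> S \<and> set (map ttgt ts) \<subseteq> S"

definition gedge :: "'q trans set \<Rightarrow> ('q \<times> 'q) set" where
  "gedge Tp = {(p, q). \<exists>d. (p, d, q) \<in> Tp}"

definition SCCs :: "'q set \<Rightarrow> 'q trans set \<Rightarrow> 'q set set" where
  "SCCs Q Tp = {S. \<exists>q \<in> Q. S = {p \<in> Q. (q, p) \<in> (gedge Tp)\<^sup>* \<and> (p, q) \<in> (gedge Tp)\<^sup>*}}"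

definition pos_enabled :: "'q trans set \<Rightarrow> 'q set \<Rightarrow> bool" where
  "pos_enabled Tp S \<longleftrightarrow> (\<exists>c. is_cycle Tp c \<and> contained c S \<and> eff c > 0)"

definition neg_enabled :: "'q trans set \<Rightarrow> 'q set \<Rightarrow> bool" where
  "neg_enabled Tp S \<longleftrightarrow> (\<exists>c. is_cycle Tp c \<and> contained c S \<and> eff c < 0)"

definition sigma_ok :: "'q set \<Rightarrow> 'q trans set \<Rightarrow> ('q set \<Rightarrow> 'q trans list) \<Rightarrow> ('q set \<Rightarrow> 'q trans list) \<Rightarrow> bool" where
  "sigma_ok Q Tp sp sm \<longleftrightarrow> (\<forall>S \<in> SCCs Q Tp.
     (pos_enabled Tp S \<longrightarrow> simple_cycle Tp (sp S) \<and> contained (sp S) S \<and> eff (sp S) > 0) \<and>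
     (neg_enabled Tp S \<longrightarrow> simple_cycle Tp (sm S) \<and> contained (sm S) S \<and> eff (sm S) < 0))"

definition normal_decomp ::
  "'q set \<Rightarrow> 'q trans set \<Rightarrow> 'q trans set \<Rightarrow> ('q set \<Rightarrow> 'q trans list) \<Rightarrow> ('q set \<Rightarrow> 'q trans list)
   \<Rightarrow> 'q set \<Rightarrow> 'q set \<Rightarrow> 'q path
   \<Rightarrow> 'q path \<Rightarrow> 'q path \<Rightarrow> 'q path \<Rightarrow> 'q path \<Rightarrow> 'q path \<Rightarrow> nat \<Rightarrow> nat \<Rightarrow> bool" where
  "normal_decomp Q Tp Tz sp sm S T \<rho> pre up cap down suf a b \<longleftrightarrow>
     S \<in> SCCs Q Tp \<and> T \<in> SCCs Q Tp \<and> pos_enabled Tp S \<and> neg_enabled Tp T \<and>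
     is_path Tp Tz pre \<and> is_path Tp Tz up \<and> is_path Tp Tz cap \<and> is_path Tp Tz down \<and> is_path Tp Tz suf \<and>
     ptgt pre = psrc up \<and> ptgt up = psrc cap \<and> ptgt cap = psrc down \<and> ptgt down = psrc suf \<and>
     \<rho> = (psrc pre, snd pre @ snd up @ snd cap @ snd down @ snd suf) \<and>
     low Q pre \<and> low Q suf \<and>
     proj up = concat (replicate a (sp S)) \<and> proj down = concat (replicate b (sm T)) \<and>
     fst (psrc cap) = base (sp S) \<and> fst (ptgt cap) = base (sm T)"

definition good_decomp ::
  "'q set \<Rightarrow> 'q trans set \<Rightarrow> 'q trans set \<Rightarrow> ('q set \<Rightarrow> 'q trans list) \<Rightarrow> ('q set \<Rightarrow> 'q trans list)
   \<Rightarrow> 'q set \<Rightarrow> 'q set \<Rightarrow> 'q path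
   \<Rightarrow> 'q path \<Rightarrow> 'q path \<Rightarrow> 'q path \<Rightarrow> 'q path \<Rightarrow> 'q path \<Rightarrow> nat \<Rightarrow> nat \<Rightarrow> bool" where
  "good_decomp Q Tp Tz sp sm S T \<rho> pre up cap down suf a b \<longleftrightarrow>
     normal_decomp Q Tp Tz sp sm S T \<rho> pre up cap down suf a b \<and>
     (let A = eff (sp S); B = - eff (sm T) in
       int a * A \<le> 2 * int (plen cap) + 2 * lcm A B \<and>
       int b * B \<le> 2 * int (plen cap) + 2 * lcm A B \<and>
       \<not> (\<exists>xs c ys. proj cap = xs @ c @ ys \<and> is_cycle Tp c \<and> gcd A B dvd eff c)) \<and>
     snd (ptgt up) > card Q \<and> snd (psrc down) > card Q \<and>
     distinct (pconfs pre @ pconfs suf)"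

end

theory Submission
  imports Defs
begin

text \<open>
  Minimality of the number of zero visits forbids two \<^emph>\<open>compatible\<close> points on the caps of
  normal arcs \<open>i < j\<close>, i.e. points in the same state whose counter values differ by a multiple of
  \<open>gcd A\<^sub>i B\<^sub>j\<close>: pumping \<open>\<sigma>\<^sup>+(S\<^sub>i)\<close> and \<open>\<sigma>\<^sup>-(T\<^sub>j)\<close> suitably often (the numbers come from
  Bezout) and jumping from one cap to the other yields a detour around the zero between the two
  arcs. Inside a single cap, two compatible points would enclose a cycle forbidden by (v).
  So for a fixed SCC \<open>S\<close> with \<open>A = eff \<sigma>\<^sup>+(S)\<close>, pigeonhole on (state, counter mod \<open>A\<close>) bounds
  the total cap length of the arcs with \<open>S\<^sub>i = S\<close> by \<open>n A\<close>, and pigeonhole on the counter at the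
  start of the caps bounds the number of arcs with \<open>(S\<^sub>i, T\<^sub>i) = (S, T)\<close> by \<open>gcd A B\<close>. Summing (iii)
  over the arcs with \<open>S\<^sub>i = S\<close>, the lcm terms contribute at most
  \<open>\<Sum>\<^sub>T gcd A B \<cdot> lcm A B = A \<Sum>\<^sub>T B \<le> A n\<close>, hence \<open>\<Sum> a\<^sub>i \<le> 4 n\<close>. Since
  \<open>len \<rho>\<^sup>i\<^sub>u\<^sub>p = a\<^sub>i |\<sigma>\<^sup>+(S\<^sub>i)| \<le> a\<^sub>i |S\<^sub>i|\<close> and the SCCs are disjoint, the sum is at most
  \<open>4 n\<^sup>2\<close>; the down parts are symmetric.
\<close>

section \<open>Step sequences\<close>

definition last_conf :: "'q conf \<Rightarrow> ('q trans \<times> 'q conf) list \<Rightarrow> 'q conf" where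
  "last_conf c xs = last (c # map snd xs)"

fun valid_steps :: "'q trans set \<Rightarrow> 'q trans set \<Rightarrow> 'q conf \<Rightarrow> ('q trans \<times> 'q conf) list \<Rightarrow> bool" where
  "valid_steps Tp Tz c [] = True"
| "valid_steps Tp Tz c (s # xs) = (fires Tp Tz (fst s) c (snd s) \<and> valid_steps Tp Tz (snd s) xs)"

definition zero_steps :: "('q trans \<times> 'q conf) list \<Rightarrow> nat" where
  "zero_steps xs = length (filter (\<lambda>s. snd (snd s) = 0) xs)"

lemma last_conf_Nil [simp]: "last_conf c [] = c"
  by (simp add: last_conf_def)

lemma last_conf_Cons [simp]: "last_conf c (s # xs) = last_conf (snd s) xs"
  by (simp add: last_conf_def)

lemma last_conf_append: "last_conf c (xs @ ys) = last_conf (last_conf c xs) ys"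
  by (induction xs arbitrary: c) auto

lemma last_conf_eq_last: "xs \<noteq> [] \<Longrightarrow> last_conf c xs = snd (last xs)"
  by (simp add: last_conf_def last_map)

lemma valid_steps_append:
  "valid_steps Tp Tz c (xs @ ys) \<longleftrightarrow> valid_steps Tp Tz c xs \<and> valid_steps Tp Tz (last_conf c xs) ys"
  by (induction xs arbitrary: c) auto

lemma zero_steps_append [simp]: "zero_steps (xs @ ys) = zero_steps xs + zero_steps ys"
  by (simp add: zero_steps_def)

lemma zeros_Pair: "zeros (c, xs) = (if snd c = 0 then 1 else 0) + zero_steps xs"
  by (simp add: zeros_def pconfs_def zero_steps_def filter_map comp_def)

lemma ptgt_eq_last_conf: "ptgt \<rho> = last_conf (psrc \<rho>) (snd \<rho>)"
  by (simp add: ptgt_def pconfs_def last_conf_def psrc_def)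

lemma nth_Suc_pconfs: "m < length xs \<Longrightarrow> pconfs (c, xs) ! Suc m = snd (xs ! m)"
  by (simp add: pconfs_def)

lemma is_path_iff_valid_steps: "is_path Tp Tz (c, xs) \<longleftrightarrow> valid_steps Tp Tz c xs"
proof (induction xs arbitrary: c)
  case Nil
  then show ?case by (simp add: is_path_def plen_def)
next
  case (Cons s xs)
  have "is_path Tp Tz (c, s # xs) \<longleftrightarrow> fires Tp Tz (fst s) c (snd s) \<and> is_path Tp Tz (snd s, xs)"
    unfolding is_path_def plen_def proj_def pconfs_def by (simp add: All_less_Suc2)
  then show ?case using Cons by simp
qed

lemma valid_steps_if_is_path: "is_path Tp Tz \<rho> \<Longrightarrow> valid_steps Tp Tz (psrc \<rho>) (snd \<rho>)"
  by (metis is_path_iff_valid_steps prod.collapse psrc_def)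

lemma steps_pos_if_between_pos:
  assumes "\<forall>m. Suc m < length (X @ M @ Y) \<longrightarrow> snd (snd ((X @ M @ Y) ! m)) > 0"
    and "M \<noteq> [] \<Longrightarrow> Y = [] \<Longrightarrow> snd (snd (last M)) > 0"
  shows "\<forall>s\<in>set M. snd (snd s) > 0"
proof
  fix s assume "s \<in> set M"
  then obtain k where k: "k < length M" "s = M ! k" by (auto simp: in_set_conv_nth)
  show "snd (snd s) > 0"
  proof (cases "Suc (length X + k) < length (X @ M @ Y)")
    case True
    then have "snd (snd ((X @ M @ Y) ! (length X + k))) > 0" using assms(1) by blast
    then show ?thesis using k by (simp add: nth_append)
  next
    case False
    have "length (X @ M @ Y) = length X + length M + length Y" by simp
    then have "length Y = 0" "k = length M - 1" using k False by linarith+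
    moreover have "M \<noteq> []" using k by auto
    ultimately show ?thesis using assms(2) k by (auto simp: last_conv_nth)
  qed
qed

section \<open>Runs that stay positive\<close>

text \<open>The counter of a run is an integer, so that truncated subtraction cannot validate a run.\<close>

fun pos_run :: "'q trans set \<Rightarrow> 'q \<Rightarrow> int \<Rightarrow> 'q trans list \<Rightarrow> bool" where
  "pos_run Tp q c [] \<longleftrightarrow> c > 0"
| "pos_run Tp q c (t # ts) \<longleftrightarrow> t \<in> Tp \<and> tsrc t = q \<and> c > 0 \<and> pos_run Tp (ttgt t) (c + teff t) ts"

fun end_state :: "'q \<Rightarrow> 'q trans list \<Rightarrow> 'q" where
  "end_state q [] = q"
| "end_state q (t # ts) = end_state (ttgt t) ts"

lemma eff_Nil [simp]: "eff [] = 0"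
  by (simp add: eff_def)

lemma eff_Cons [simp]: "eff (t # ts) = teff t + eff ts"
  by (simp add: eff_def)

lemma eff_append [simp]: "eff (xs @ ys) = eff xs + eff ys"
  by (simp add: eff_def)

lemma eff_take_drop: "eff (take k ts) + eff (drop k ts) = eff ts"
  by (metis append_take_drop_id eff_append)

lemma eff_concat_replicate: "eff (concat (replicate m ts)) = int m * eff ts"
  by (induction m) (auto simp: algebra_simps)

lemma abs_eff_le_length:
  "\<forall>t\<in>Tp. \<bar>teff t\<bar> \<le> 1 \<Longrightarrow> set ts \<subseteq> Tp \<Longrightarrow> \<bar>eff ts\<bar> \<le> int (length ts)"
proof (induction ts)
  case (Cons t ts)
  then have "\<bar>teff t\<bar> \<le> 1" "\<bar>eff ts\<bar> \<le> int (length ts)" by auto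
  then show ?case using abs_triangle_ineq[of "teff t" "eff ts"] by simp
qed simp

lemma end_state_append: "end_state q (xs @ ys) = end_state (end_state q xs) ys"
  by (induction xs arbitrary: q) auto

lemma end_state_eq_ttgt_last: "ts \<noteq> [] \<Longrightarrow> end_state q ts = ttgt (last ts)"
  by (induction ts arbitrary: q) (auto simp: neq_Nil_conv)

lemma end_state_in: "end_state q ts \<in> insert q (ttgt ` set ts)"
  by (induction ts arbitrary: q) auto

lemma end_state_concat_replicate: "end_state q ts = q \<Longrightarrow> end_state q (concat (replicate m ts)) = q"
  by (induction m) (auto simp: end_state_append)

lemma consistent_Cons:
  "consistent (t # ts) \<longleftrightarrow> (ts \<noteq> [] \<longrightarrow> ttgt t = tsrc (hd ts)) \<and> consistent ts"
  unfolding consistent_def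
  by (cases ts) (auto simp: less_Suc_eq_0_disj All_less_Suc2 nth_Cons split: nat.splits)

lemma is_cycle_imp:
  "is_cycle Tp \<sigma> \<Longrightarrow> consistent \<sigma> \<and> set \<sigma> \<subseteq> Tp \<and> \<sigma> \<noteq> [] \<and> tsrc (hd \<sigma>) = base \<sigma>
     \<and> end_state (base \<sigma>) \<sigma> = base \<sigma>"
  by (auto simp: is_cycle_def base_def end_state_eq_ttgt_last)

lemma pos_run_imp_pos: "pos_run Tp q c ts \<Longrightarrow> c > 0"
  by (cases ts) auto

lemma pos_run_append:
  "pos_run Tp q c (xs @ ys) \<longleftrightarrow> pos_run Tp q c xs \<and> pos_run Tp (end_state q xs) (c + eff xs) ys"
  by (induction xs arbitrary: q c) (auto simp: add.assoc dest: pos_run_imp_pos)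

lemma pos_run_mono: "pos_run Tp q c ts \<Longrightarrow> c \<le> d \<Longrightarrow> pos_run Tp q d ts"
  by (induction ts arbitrary: q c d) force+

lemma pos_run_imp_consistent:
  "pos_run Tp q c ts \<Longrightarrow> consistent ts \<and> set ts \<subseteq> Tp \<and> (ts \<noteq> [] \<longrightarrow> tsrc (hd ts) = q)"
proof (induction ts arbitrary: q c)
  case Nil
  then show ?case by (simp add: consistent_def)
next
  case (Cons t ts)
  then have "pos_run Tp (ttgt t) (c + teff t) ts" "t \<in> Tp" "tsrc t = q" by auto
  with Cons.IH[OF this(1)] show ?case by (auto simp: consistent_Cons)
qed

lemma pos_run_if_length_less:
  assumes unit: "\<forall>t\<in>Tp. \<bar>teff t\<bar> \<le> 1"
  shows "consistent ts \<Longrightarrow> set ts \<subseteq> Tp \<Longrightarrow> (ts \<noteq> [] \<longrightarrow> tsrc (hd ts) = q)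
    \<Longrightarrow> int (length ts) < c \<Longrightarrow> pos_run Tp q c ts"
proof (induction ts arbitrary: q c)
  case (Cons t ts)
  have "\<bar>teff t\<bar> \<le> 1" using unit Cons.prems by auto
  then have "int (length ts) < c + teff t" using Cons.prems(4) by auto
  then have "pos_run Tp (ttgt t) (c + teff t) ts"
    using Cons.IH[of "ttgt t" "c + teff t"] Cons.prems by (auto simp: consistent_Cons)
  then show ?case using Cons.prems by auto
qed simp

lemma pos_run_concat_replicate:
  assumes unit: "\<forall>t\<in>Tp. \<bar>teff t\<bar> \<le> 1" and \<sigma>: "is_cycle Tp \<sigma>"
  shows "int (length \<sigma>) < c \<Longrightarrow> int (length \<sigma>) < c + int m * eff \<sigma>
    \<Longrightarrow> pos_run Tp (base \<sigma>) c (concat (replicate m \<sigma>))"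
proof (induction m arbitrary: c)
  case (Suc m)
  have \<sigma>': "consistent \<sigma>" "set \<sigma> \<subseteq> Tp" "tsrc (hd \<sigma>) = base \<sigma>" "end_state (base \<sigma>) \<sigma> = base \<sigma>"
    using is_cycle_imp[OF \<sigma>] by auto
  have once: "pos_run Tp (base \<sigma>) c \<sigma>"
    using pos_run_if_length_less[OF unit \<sigma>'(1,2)] \<sigma>'(3) Suc.prems(1) by blast
  have "int (length \<sigma>) < c + eff \<sigma>"
  proof (cases "eff \<sigma> \<ge> 0")
    case False
    then have "int m * eff \<sigma> \<le> 0" by (simp add: mult_nonneg_nonpos)
    then show ?thesis using Suc.prems by (auto simp: algebra_simps)
  qed (use Suc.prems in auto)
  moreover have "int (length \<sigma>) < c + eff \<sigma> + int m * eff \<sigma>"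
    using Suc.prems by (auto simp: algebra_simps)
  ultimately have "pos_run Tp (base \<sigma>) (c + eff \<sigma>) (concat (replicate m \<sigma>))"
    by (rule Suc.IH)
  then show ?case using once \<sigma>'(4) by (simp add: pos_run_append)
qed simp

lemma pos_run_imp_steps:
  "pos_run Tp q c ts \<Longrightarrow> \<exists>xs. map fst xs = ts \<and> valid_steps Tp Tz (q, nat c) xs
     \<and> last_conf (q, nat c) xs = (end_state q ts, nat (c + eff ts)) \<and> zero_steps xs = 0"
proof (induction ts arbitrary: q c)
  case Nil
  then show ?case by (intro exI[of _ "[]"]) (simp add: zero_steps_def)
next
  case (Cons t ts)
  then have t: "t \<in> Tp" "tsrc t = q" "c > 0" "pos_run Tp (ttgt t) (c + teff t) ts" by auto
  have pos: "c + teff t > 0" using pos_run_imp_pos[OF t(4)] .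
  obtain xs where "map fst xs = ts" "valid_steps Tp Tz (ttgt t, nat (c + teff t)) xs"
    "last_conf (ttgt t, nat (c + teff t)) xs = (end_state (ttgt t) ts, nat (c + teff t + eff ts))"
    "zero_steps xs = 0"
    using Cons.IH[OF t(4)] by blast
  then show ?case using t pos
    by (intro exI[of _ "(t, (ttgt t, nat (c + teff t))) # xs"])
      (auto simp: fires_def zero_steps_def add.assoc)
qed

lemma pos_steps_imp_pos_run:
  "valid_steps Tp Tz c xs \<Longrightarrow> snd c > 0 \<Longrightarrow> \<forall>s\<in>set xs. snd (snd s) > 0 \<Longrightarrow>
     pos_run Tp (fst c) (int (snd c)) (map fst xs) \<and> end_state (fst c) (map fst xs) = fst (last_conf c xs)
     \<and> int (snd c) + eff (map fst xs) = int (snd (last_conf c xs))"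
proof (induction xs arbitrary: c)
  case (Cons s xs)
  then have f: "fires Tp Tz (fst s) c (snd s)" "valid_steps Tp Tz (snd s) xs" "snd (snd s) > 0"
    by auto
  from f(1) Cons.prems(2) have "fst c = tsrc (fst s)" "fst s \<in> Tp" "fst (snd s) = ttgt (fst s)"
    "int (snd (snd s)) = int (snd c) + teff (fst s)"
    by (auto simp: fires_def)
  then show ?case using Cons.IH[OF f(2,3)] Cons.prems by (auto simp: add.assoc)
qed simp

lemma bezout_nonneg:
  fixes A B d :: int
  assumes "A > 0" "B > 0" "gcd A B dvd d"
  shows "\<exists>l k :: nat. d + int l * A = int k * B"
proof -
  obtain u v where uv: "u * A + v * B = gcd A B" using bezout_int by blast
  obtain e where e: "d = gcd A B * e" using assms(3) by (auto simp: dvd_def)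
  define l0 where "l0 = - e * u"
  define k0 where "k0 = e * v"
  have sol: "d + l0 * A = k0 * B"
    unfolding l0_def k0_def e uv[symmetric] by (simp add: algebra_simps)
  define t where "t = \<bar>l0\<bar> + \<bar>k0\<bar>"
  have "l0 + t * B \<ge> 0" "k0 + t * A \<ge> 0"
    unfolding t_def using assms(1,2) by (smt (verit) mult_le_cancel_left1 zero_le_mult_iff)+
  moreover have "d + (l0 + t * B) * A = (k0 + t * A) * B" using sol by (simp add: algebra_simps)
  ultimately show ?thesis
    by (intro exI[of _ "nat (l0 + t * B)"] exI[of _ "nat (k0 + t * A)"]) simp
qed

text \<open>
  The witness is \<open>\<sigma>\<^sup>l \<cdot> P[..x] \<cdot> P'[y..] \<cdot> \<tau>\<^sup>k\<close>, with \<open>l, k\<close> from Bezout: \<open>P'[y..]\<close> is then run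
  \<open>k \<cdot> |eff \<tau>|\<close> higher than in \<open>P'\<close>, which \<open>\<tau>\<^sup>k\<close> takes back.
\<close>

lemma pos_run_splice:
  assumes unit: "\<forall>t\<in>Tp. \<bar>teff t\<bar> \<le> 1"
    and \<sigma>: "is_cycle Tp \<sigma>" "base \<sigma> = p" "eff \<sigma> > 0" "int (length \<sigma>) < U"
    and \<tau>: "is_cycle Tp \<tau>" "base \<tau> = r" "eff \<tau> < 0" "int (length \<tau>) < D"
    and P: "pos_run Tp p U P"
    and P': "pos_run Tp p' U' P'" "end_state p' P' = r" "U' + eff P' = D"
    and meet: "end_state p (take x P) = end_state p' (take y P')"
    and dvd: "gcd (eff \<sigma>) (- eff \<tau>) dvd (U + eff (take x P)) - (U' + eff (take y P'))"
  shows "\<exists>\<pi>. pos_run Tp p U \<pi> \<and> end_state p \<pi> = r \<and> U + eff \<pi> = D"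
proof -
  obtain l k :: nat
    where lk: "(U + eff (take x P)) - (U' + eff (take y P')) + int l * eff \<sigma> = int k * - eff \<tau>"
    using bezout_nonneg[OF \<sigma>(3) _ dvd] \<tau>(3) by auto
  have lA: "0 \<le> int l * eff \<sigma>" and kB: "0 \<le> int k * - eff \<tau>" using \<sigma>(3) \<tau>(3) by (simp_all add: mult_nonneg_nonpos)
  define q where "q = end_state p (take x P)"
  have "int (length \<sigma>) < U + int l * eff \<sigma>" using \<sigma>(4) lA by linarith
  then have r1: "pos_run Tp p U (concat (replicate l \<sigma>))"
    using pos_run_concat_replicate[OF unit \<sigma>(1,4)] \<sigma>(2) by simp
  have "pos_run Tp p U (take x P)" using P pos_run_append[of Tp p U "take x P" "drop x P"] by simp
  then have r2: "pos_run Tp p (U + int l * eff \<sigma>) (take x P)" by (rule pos_run_mono) (use lA in simp)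
  have r3: "pos_run Tp q (U + int l * eff \<sigma> + eff (take x P)) (drop y P')"
  proof (rule pos_run_mono)
    show "pos_run Tp q (U' + eff (take y P')) (drop y P')"
      using P'(1) pos_run_append[of Tp p' U' "take y P'" "drop y P'"] meet by (simp add: q_def)
    show "U' + eff (take y P') \<le> U + int l * eff \<sigma> + eff (take x P)" using lk kB by linarith
  qed
  have e3: "end_state q (drop y P') = r"
    using P'(2) meet end_state_append[of p' "take y P'" "drop y P'"] by (simp add: q_def)
  have c3: "U + int l * eff \<sigma> + eff (take x P) + eff (drop y P') = D + int k * - eff \<tau>"
    using lk P'(3) eff_take_drop[of y P'] by linarith
  have r4: "pos_run Tp r (D + int k * - eff \<tau>) (concat (replicate k \<tau>))"
    using pos_run_concat_replicate[OF unit \<tau>(1), of "D + int k * - eff \<tau>" k] \<tau>(2,4) kB by simp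
  define \<pi> where "\<pi> = concat (replicate l \<sigma>) @ take x P @ drop y P' @ concat (replicate k \<tau>)"
  have "end_state p (concat (replicate l \<sigma>)) = p" "end_state r (concat (replicate k \<tau>)) = r"
    using is_cycle_imp[OF \<sigma>(1)] is_cycle_imp[OF \<tau>(1)] \<sigma>(2) \<tau>(2)
    by (auto intro: end_state_concat_replicate)
  then have "pos_run Tp p U \<pi> \<and> end_state p \<pi> = r \<and> U + eff \<pi> = D"
    using r1 r2 r3 r4 c3 e3 unfolding \<pi>_def q_def
    by (simp add: pos_run_append end_state_append eff_concat_replicate add.assoc)
  then show ?thesis by blast
qed

lemma fewer_zeros_by_pos_run:
  assumes steps: "valid_steps Tp Tz \<alpha> (X @ M @ Y)"
    and run: "pos_run Tp p (int U) \<pi>" and start: "last_conf \<alpha> X = (p, U)"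
    and target: "end_state p \<pi> = fst (last_conf \<alpha> (X @ M))"
      "int U + eff \<pi> = int (snd (last_conf \<alpha> (X @ M)))"
    and zero: "zero_steps M > 0"
  shows "\<exists>\<rho>'. is_path Tp Tz \<rho>' \<and> psrc \<rho>' = \<alpha> \<and> ptgt \<rho>' = last_conf \<alpha> (X @ M @ Y)
           \<and> zeros \<rho>' < zeros (\<alpha>, X @ M @ Y)"
proof -
  obtain xs where xs: "map fst xs = \<pi>" "valid_steps Tp Tz (p, nat (int U)) xs"
    "last_conf (p, nat (int U)) xs = (end_state p \<pi>, nat (int U + eff \<pi>))" "zero_steps xs = 0"
    using pos_run_imp_steps[OF run, of Tz] by blast
  have lc: "last_conf (p, U) xs = last_conf \<alpha> (X @ M)" using xs(3) target by (simp add: prod_eq_iff)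
  have "valid_steps Tp Tz \<alpha> X" "valid_steps Tp Tz (last_conf \<alpha> (X @ M)) Y"
    using steps by (auto simp: valid_steps_append last_conf_append)
  then have "valid_steps Tp Tz \<alpha> (X @ xs @ Y)"
    using xs(2) start lc by (simp add: valid_steps_append last_conf_append)
  moreover have "last_conf \<alpha> (X @ xs @ Y) = last_conf \<alpha> (X @ M @ Y)"
    using start lc by (simp add: last_conf_append)
  moreover have "zeros (\<alpha>, X @ xs @ Y) < zeros (\<alpha>, X @ M @ Y)"
    using xs(4) zero by (simp add: zeros_Pair)
  ultimately show ?thesis
    by (intro exI[of _ "(\<alpha>, X @ xs @ Y)"]) (simp add: is_path_iff_valid_steps psrc_def ptgt_eq_last_conf)
qed

section \<open>Cycles, SCCs and counting\<close>

lemma simple_cycle_length_le: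
  "simple_cycle Tp \<sigma> \<Longrightarrow> contained \<sigma> X \<Longrightarrow> finite X \<Longrightarrow> length \<sigma> \<le> card X"
  unfolding simple_cycle_def contained_def by (metis card_mono distinct_card length_map)

lemma SCC_subset: "X \<in> SCCs Q Tp \<Longrightarrow> X \<subseteq> Q"
  by (auto simp: SCCs_def)

lemma SCC_eq_if_common:
  assumes "X \<in> SCCs Q Tp" "Y \<in> SCCs Q Tp" "z \<in> X" "z \<in> Y"
  shows "X = Y"
proof -
  obtain q1 where q1: "X = {p \<in> Q. (q1, p) \<in> (gedge Tp)\<^sup>* \<and> (p, q1) \<in> (gedge Tp)\<^sup>*}"
    using assms(1) by (auto simp: SCCs_def)
  obtain q2 where q2: "Y = {p \<in> Q. (q2, p) \<in> (gedge Tp)\<^sup>* \<and> (p, q2) \<in> (gedge Tp)\<^sup>*}"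
    using assms(2) by (auto simp: SCCs_def)
  have "(q1, z) \<in> (gedge Tp)\<^sup>*" "(z, q1) \<in> (gedge Tp)\<^sup>*" "(q2, z) \<in> (gedge Tp)\<^sup>*" "(z, q2) \<in> (gedge Tp)\<^sup>*"
    using assms(3,4) q1 q2 by auto
  then have "(q1, q2) \<in> (gedge Tp)\<^sup>*" "(q2, q1) \<in> (gedge Tp)\<^sup>*" by (meson rtrancl_trans)+
  then show ?thesis unfolding q1 q2 by (auto intro: rtrancl_trans)
qed

lemma sum_card_SCCs_le:
  assumes "finite Q" "C \<subseteq> SCCs Q Tp"
  shows "(\<Sum>X\<in>C. card X) \<le> card Q"
proof -
  have "pairwise disjnt C"
  proof (rule pairwiseI)
    fix X Y assume "X \<in> C" "Y \<in> C" "X \<noteq> Y"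
    then show "disjnt X Y" using assms(2) SCC_eq_if_common[of X Q Tp Y] by (auto simp: disjnt_def)
  qed
  moreover have "X \<in> C \<Longrightarrow> finite X" for X
    using assms SCC_subset finite_subset by (metis subsetD)
  ultimately have "card (\<Union>C) = (\<Sum>X\<in>C. card X)" by (rule card_Union_disjoint)
  moreover have "\<Union>C \<subseteq> Q" using assms(2) SCC_subset by blast
  ultimately show ?thesis using assms(1) card_mono by metis
qed

lemma concat_map_take_split:
  assumes "i < j" "j \<le> length xs"
  shows "concat (map f (take j xs))
    = concat (map f (take i xs)) @ f (xs ! i) @ concat (map f (take (j - Suc i) (drop (Suc i) xs)))"
proof -
  have "take j xs = take (Suc i + (j - Suc i)) xs" using assms by simp
  also have "\<dots> = take (Suc i) xs @ take (j - Suc i) (drop (Suc i) xs)" by (rule take_add)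
  finally show ?thesis using assms by (simp add: take_Suc_conv_app_nth)
qed

lemma concat_map_nth_split:
  "j < length xs \<Longrightarrow> concat (map f xs) = concat (map f (take j xs)) @ f (xs ! j) @ concat (map f (drop (Suc j) xs))"
  by (metis (no_types) concat.simps(2) concat_append id_take_nth_drop list.simps(9) map_append)

lemma sum_le_by_groups:
  fixes f c :: "'i \<Rightarrow> nat" and G :: "'i \<Rightarrow> 'a set"
  assumes "finite I" "\<And>i. i \<in> I \<Longrightarrow> f i \<le> c i * card (G i)"
    and "\<And>g. g \<in> G ` I \<Longrightarrow> (\<Sum>i\<in>{i \<in> I. G i = g}. c i) \<le> K"
    and "(\<Sum>g\<in>G ` I. card g) \<le> n"
  shows "(\<Sum>i\<in>I. f i) \<le> n * K"
proof -
  have "(\<Sum>i\<in>I. f i) \<le> (\<Sum>i\<in>I. c i * card (G i))" using assms(2) by (rule sum_mono)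
  also have "\<dots> = (\<Sum>g\<in>G ` I. \<Sum>i\<in>{i \<in> I. G i = g}. c i * card (G i))"
    using assms(1) by (rule sum.image_gen)
  also have "\<dots> = (\<Sum>g\<in>G ` I. card g * (\<Sum>i\<in>{i \<in> I. G i = g}. c i))"
    by (rule sum.cong) (auto simp: sum_distrib_left mult.commute)
  also have "\<dots> \<le> (\<Sum>g\<in>G ` I. card g * K)" by (rule sum_mono) (use assms(3) in simp)
  also have "\<dots> = (\<Sum>g\<in>G ` I. card g) * K" by (simp add: sum_distrib_right)
  also have "\<dots> \<le> n * K" using assms(4) by simp
  finally show ?thesis .
qed

lemma sum_repetitions_le:
  fixes I :: "'i set" and G :: "'i \<Rightarrow> 'a set" and A :: int and B :: "'a set \<Rightarrow> int"
    and len c :: "'i \<Rightarrow> nat" and n :: nat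
  assumes fin: "finite I" and A: "A > 0"
    and rep: "\<And>i. i \<in> I \<Longrightarrow> int (c i) * A \<le> 2 * int (len i) + 2 * lcm A (B (G i))"
    and len: "(\<Sum>i\<in>I. len i) \<le> n * nat A"
    and group: "\<And>t. t \<in> G ` I \<Longrightarrow> card {i \<in> I. G i = t} \<le> nat (gcd A (B t)) \<and> 0 < B t \<and> B t \<le> int (card t)"
    and cards: "(\<Sum>t\<in>G ` I. card t) \<le> n"
  shows "(\<Sum>i\<in>I. c i) \<le> 4 * n"
proof -
  have "(\<Sum>i\<in>I. int (len i)) \<le> int (n * nat A)" using len by (simp only: of_nat_sum [symmetric] of_nat_le_iff)
  then have len': "(\<Sum>i\<in>I. int (len i)) \<le> int n * A" using A by simp
  have lcm_group: "int (card {i \<in> I. G i = t}) * lcm A (B t) \<le> A * int (card t)" if t: "t \<in> G ` I" for t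
  proof -
    have "int (card {i \<in> I. G i = t}) * lcm A (B t) \<le> gcd A (B t) * lcm A (B t)"
      using group[OF t] by (intro mult_right_mono) (auto simp: le_nat_iff)
    also have "\<dots> = A * B t" using prod_gcd_lcm_int[of A "B t"] A group[OF t] by simp
    also have "\<dots> \<le> A * int (card t)" using group[OF t] A by simp
    finally show ?thesis .
  qed
  have "(\<Sum>i\<in>I. lcm A (B (G i))) = (\<Sum>t\<in>G ` I. \<Sum>i\<in>{i \<in> I. G i = t}. lcm A (B (G i)))"
    using fin by (rule sum.image_gen)
  also have "\<dots> = (\<Sum>t\<in>G ` I. int (card {i \<in> I. G i = t}) * lcm A (B t))"
    by (rule sum.cong) auto
  also have "\<dots> \<le> (\<Sum>t\<in>G ` I. A * int (card t))" using lcm_group by (rule sum_mono)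
  also have "\<dots> = A * int (\<Sum>t\<in>G ` I. card t)" by (simp add: sum_distrib_left)
  also have "\<dots> \<le> A * int n" using cards A by (intro mult_left_mono) (simp_all only: of_nat_le_iff)
  finally have lcms: "(\<Sum>i\<in>I. lcm A (B (G i))) \<le> A * int n" .
  have "A * int (\<Sum>i\<in>I. c i) = (\<Sum>i\<in>I. int (c i) * A)"
    by (simp add: sum_distrib_left mult.commute)
  also have "\<dots> \<le> (\<Sum>i\<in>I. 2 * int (len i) + 2 * lcm A (B (G i)))" using rep by (rule sum_mono)
  also have "\<dots> = 2 * (\<Sum>i\<in>I. int (len i)) + 2 * (\<Sum>i\<in>I. lcm A (B (G i)))"
    by (simp add: sum.distrib sum_distrib_left)
  also have "\<dots> \<le> A * (4 * int n)" using len' lcms by (simp add: algebra_simps)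
  finally have "int (\<Sum>i\<in>I. c i) \<le> 4 * int n" using A by simp
  then show ?thesis by linarith
qed

section \<open>Normal arcs of a zero-minimal path\<close>

locale minimal_decomposition =
  fixes Q :: "'q set" and Tp Tz :: "'q trans set"
    and sp sm :: "'q set \<Rightarrow> 'q trans list"
    and \<alpha> \<beta> :: "'q conf" and rs :: "'q path list"
    and N :: "nat set"
    and S T :: "nat \<Rightarrow> 'q set"
    and pre up cap down suf :: "nat \<Rightarrow> 'q path"
    and a b :: "nat \<Rightarrow> nat"
  assumes ocs: "ocs Q Tp Tz"
    and sigma: "sigma_ok Q Tp sp sm"
    and arcs: "\<forall>i < length rs. is_arc Tp Tz (rs ! i)"
    and chain: "\<forall>i. Suc i < length rs \<longrightarrow> ptgt (rs ! i) = psrc (rs ! Suc i)"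
    and ends: "if rs = [] then \<alpha> = \<beta> else psrc (hd rs) = \<alpha> \<and> ptgt (last rs) = \<beta>"
    and minimal: "\<forall>\<rho>'. is_path Tp Tz \<rho>' \<and> psrc \<rho>' = \<alpha> \<and> ptgt \<rho>' = \<beta> \<longrightarrow>
                    zeros (\<alpha>, concat (map snd rs)) \<le> zeros \<rho>'"
    and N_subset: "N \<subseteq> {..<length rs}"
    and normal: "\<forall>i \<in> N. good_decomp Q Tp Tz sp sm (S i) (T i) (rs ! i)
                    (pre i) (up i) (cap i) (down i) (suf i) (a i) (b i)"
begin

abbreviation gain :: "'q set \<Rightarrow> int" where "gain X \<equiv> eff (sp X)"
abbreviation loss :: "'q set \<Rightarrow> int" where "loss X \<equiv> - eff (sm X)"

lemma finite_Q: "finite Q"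
  using ocs by (simp add: ocs_def)

lemma unit_effects: "\<forall>t\<in>Tp. \<bar>teff t\<bar> \<le> 1"
  using ocs by (auto simp: ocs_def teff_def)

lemma trans_in_Q: "t \<in> Tp \<Longrightarrow> tsrc t \<in> Q \<and> ttgt t \<in> Q"
  using ocs by (auto simp: ocs_def tsrc_def ttgt_def)

lemma finite_N: "finite N"
  using N_subset finite_subset by blast

lemma good_decomp_nth: "i \<in> N \<Longrightarrow> good_decomp Q Tp Tz sp sm (S i) (T i) (rs ! i)
    (pre i) (up i) (cap i) (down i) (suf i) (a i) (b i)"
  using normal by blast

lemma normal_decomp_nth: "i \<in> N \<Longrightarrow> normal_decomp Q Tp Tz sp sm (S i) (T i) (rs ! i)
    (pre i) (up i) (cap i) (down i) (suf i) (a i) (b i)"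
  using good_decomp_nth by (simp add: good_decomp_def)

lemma SCCs_S_T: "i \<in> N \<Longrightarrow> S i \<in> SCCs Q Tp \<and> T i \<in> SCCs Q Tp"
  using normal_decomp_nth[of i] by (auto simp: normal_decomp_def)

lemma sp_props: "i \<in> N \<Longrightarrow> simple_cycle Tp (sp (S i)) \<and> contained (sp (S i)) (S i) \<and> gain (S i) > 0"
  using normal_decomp_nth[of i] sigma by (auto simp: normal_decomp_def sigma_ok_def)

lemma sm_props: "i \<in> N \<Longrightarrow> simple_cycle Tp (sm (T i)) \<and> contained (sm (T i)) (T i) \<and> loss (T i) > 0"
  using normal_decomp_nth[of i] sigma by (auto simp: normal_decomp_def sigma_ok_def)

lemma length_sp_le: "i \<in> N \<Longrightarrow> length (sp (S i)) \<le> card (S i) \<and> card (S i) \<le> card Q"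
  using sp_props[of i] SCCs_S_T[of i] SCC_subset[of "S i" Q Tp] finite_Q
  by (meson card_mono finite_subset simple_cycle_length_le)

lemma length_sm_le: "i \<in> N \<Longrightarrow> length (sm (T i)) \<le> card (T i) \<and> card (T i) \<le> card Q"
  using sm_props[of i] SCCs_S_T[of i] SCC_subset[of "T i" Q Tp] finite_Q
  by (meson card_mono finite_subset simple_cycle_length_le)

lemma gain_le_card: "i \<in> N \<Longrightarrow> gain (S i) \<le> int (card (S i))"
  using abs_eff_le_length[OF unit_effects, of "sp (S i)"] sp_props[of i] length_sp_le[of i]
  by (auto simp: simple_cycle_def is_cycle_def)

lemma loss_le_card: "i \<in> N \<Longrightarrow> loss (T i) \<le> int (card (T i))"
  using abs_eff_le_length[OF unit_effects, of "sm (T i)"] sm_props[of i] length_sm_le[of i]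
  by (auto simp: simple_cycle_def is_cycle_def)

lemma counter_cap_down_gt: "i \<in> N \<Longrightarrow> snd (psrc (cap i)) > card Q \<and> snd (psrc (down i)) > card Q"
  using good_decomp_nth[of i] normal_decomp_nth[of i] by (auto simp: good_decomp_def normal_decomp_def)

lemma state_cap_down: "i \<in> N \<Longrightarrow> fst (psrc (cap i)) = base (sp (S i)) \<and> fst (psrc (down i)) = base (sm (T i))"
  using normal_decomp_nth[of i] by (auto simp: normal_decomp_def)

lemma sp_cycle_at_cap: "i \<in> N \<Longrightarrow> is_cycle Tp (sp (S i)) \<and> base (sp (S i)) = fst (psrc (cap i))
    \<and> gain (S i) > 0 \<and> int (length (sp (S i))) < int (snd (psrc (cap i)))"
  using sp_props[of i] length_sp_le[of i] counter_cap_down_gt[of i] state_cap_down[of i]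
  by (auto simp: simple_cycle_def)

lemma sm_cycle_at_down: "i \<in> N \<Longrightarrow> is_cycle Tp (sm (T i)) \<and> base (sm (T i)) = fst (psrc (down i))
    \<and> eff (sm (T i)) < 0 \<and> int (length (sm (T i))) < int (snd (psrc (down i)))"
  using sm_props[of i] length_sm_le[of i] counter_cap_down_gt[of i] state_cap_down[of i]
  by (auto simp: simple_cycle_def)

lemma rs_nth_eq: "i \<in> N \<Longrightarrow>
    rs ! i = (psrc (pre i), snd (pre i) @ snd (up i) @ snd (cap i) @ snd (down i) @ snd (suf i))"
  using normal_decomp_nth[of i] by (auto simp: normal_decomp_def)

lemma last_conf_up_cap: "i \<in> N \<Longrightarrow> last_conf (psrc (pre i)) (snd (pre i) @ snd (up i)) = psrc (cap i)
   \<and> last_conf (psrc (cap i)) (snd (cap i)) = psrc (down i)"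
  using normal_decomp_nth[of i] by (auto simp: normal_decomp_def last_conf_append ptgt_eq_last_conf[symmetric])

lemma cap_steps_pos:
  assumes i: "i \<in> N"
  shows "\<forall>s\<in>set (snd (cap i)). snd (snd s) > 0"
proof (rule steps_pos_if_between_pos)
  let ?X = "snd (pre i) @ snd (up i)" and ?M = "snd (cap i)" and ?Y = "snd (down i) @ snd (suf i)"
  have arc: "is_arc Tp Tz (psrc (pre i), ?X @ ?M @ ?Y)"
    using arcs N_subset i rs_nth_eq[OF i] by (metis append.assoc lessThan_iff subsetD)
  show "\<forall>m. Suc m < length (?X @ ?M @ ?Y) \<longrightarrow> snd (snd ((?X @ ?M @ ?Y) ! m)) > 0"
  proof (intro allI impI)
    fix m assume m: "Suc m < length (?X @ ?M @ ?Y)"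
    then have "snd (pconfs (psrc (pre i), ?X @ ?M @ ?Y) ! Suc m) > 0"
      using arc unfolding is_arc_def plen_def by auto
    then show "snd (snd ((?X @ ?M @ ?Y) ! m)) > 0" using m nth_Suc_pconfs[of m "?X @ ?M @ ?Y" "psrc (pre i)"] by simp
  qed
  show "snd (snd (last ?M)) > 0" if "?M \<noteq> []"
    using last_conf_up_cap[OF i] counter_cap_down_gt[OF i] last_conf_eq_last[OF that, of "psrc (cap i)"]
    by simp
qed

lemma cap_pos_run:
  assumes i: "i \<in> N"
  shows "pos_run Tp (fst (psrc (cap i))) (int (snd (psrc (cap i)))) (proj (cap i))
    \<and> end_state (fst (psrc (cap i))) (proj (cap i)) = fst (psrc (down i))
    \<and> int (snd (psrc (cap i))) + eff (proj (cap i)) = int (snd (psrc (down i)))"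
proof -
  have "valid_steps Tp Tz (psrc (cap i)) (snd (cap i))"
    by (rule valid_steps_if_is_path) (use normal_decomp_nth[OF i] in \<open>simp add: normal_decomp_def\<close>)
  moreover have "snd (psrc (cap i)) > 0" using counter_cap_down_gt[OF i] by auto
  ultimately show ?thesis
    using pos_steps_imp_pos_run[OF _ _ cap_steps_pos[OF i]] last_conf_up_cap[OF i]
    by (simp add: proj_def)
qed

lemma zero_step_after_cap:
  assumes i: "i \<in> N"
  shows "zero_steps (snd (cap i) @ snd (down i) @ snd (suf i)) > 0"
proof -
  define R where "R = snd (cap i) @ snd (down i) @ snd (suf i)"
  have "snd (ptgt (rs ! i)) = 0" using arcs N_subset i by (auto simp: is_arc_def)
  moreover have "ptgt (rs ! i) = last_conf (psrc (cap i)) R"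
    using rs_nth_eq[OF i] last_conf_up_cap[OF i]
    by (simp add: R_def ptgt_eq_last_conf psrc_def last_conf_append)
  ultimately have z: "snd (last_conf (psrc (cap i)) R) = 0" by simp
  then have "R \<noteq> []" using counter_cap_down_gt[OF i] by (metis last_conf_Nil gr_implies_not0)
  then have "last R \<in> set R" "snd (snd (last R)) = 0"
    using z last_conf_eq_last[of R "psrc (cap i)"] by simp_all
  then show ?thesis unfolding zero_steps_def R_def[symmetric]
    by (metis (mono_tags, lifting) filter_empty_conv length_greater_0_conv)
qed

lemma last_conf_take_rs: "k < length rs \<Longrightarrow> last_conf \<alpha> (concat (map snd (take k rs))) = psrc (rs ! k)"
proof (induction k)
  case 0
  then show ?case using ends by (simp add: hd_conv_nth split: if_splits)
next
  case (Suc k)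
  then have "last_conf \<alpha> (concat (map snd (take (Suc k) rs))) = ptgt (rs ! k)"
    by (simp add: take_Suc_conv_app_nth last_conf_append ptgt_eq_last_conf)
  then show ?case using chain Suc.prems by simp
qed

lemma valid_steps_rs: "valid_steps Tp Tz \<alpha> (concat (map snd rs))"
proof -
  have "valid_steps Tp Tz \<alpha> (concat (map snd (take k rs)))" if "k \<le> length rs" for k
    using that
  proof (induction k)
    case (Suc k)
    have "valid_steps Tp Tz (psrc (rs ! k)) (snd (rs ! k))"
      by (rule valid_steps_if_is_path) (use arcs Suc.prems in \<open>simp add: is_arc_def\<close>)
    then show ?case using Suc last_conf_take_rs[of k]
      by (simp add: take_Suc_conv_app_nth valid_steps_append)
  qed simp
  then show ?thesis using order_refl take_all by metis
qed

lemma last_conf_rs: "rs \<noteq> [] \<Longrightarrow> last_conf \<alpha> (concat (map snd rs)) = \<beta>"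
  using concat_map_nth_split[of "length rs - 1" rs snd] last_conf_take_rs[of "length rs - 1"] ends
  by (simp add: last_conf_append ptgt_eq_last_conf last_conv_nth)

text \<open>Such a run would bypass the zero at the end of arc \<open>i\<close>.\<close>

lemma no_pos_run_between_caps:
  assumes i: "i \<in> N" and j: "j \<in> N" and ij: "i < j"
    and run: "pos_run Tp (fst (psrc (cap i))) (int (snd (psrc (cap i)))) \<pi>"
      "end_state (fst (psrc (cap i))) \<pi> = fst (psrc (down j))"
      "int (snd (psrc (cap i))) + eff \<pi> = int (snd (psrc (down j)))"
  shows False
proof -
  have il: "i < length rs" and jl: "j < length rs" using N_subset i j by auto
  define X where "X = concat (map snd (take i rs)) @ snd (pre i) @ snd (up i)"
  define M where "M = snd (cap i) @ snd (down i) @ snd (suf i)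
    @ concat (map snd (take (j - Suc i) (drop (Suc i) rs))) @ snd (pre j) @ snd (up j) @ snd (cap j)"
  define Y where "Y = snd (down j) @ snd (suf j) @ concat (map snd (drop (Suc j) rs))"
  have XM: "X @ M = concat (map snd (take j rs)) @ snd (pre j) @ snd (up j) @ snd (cap j)"
    using concat_map_take_split[OF ij, of rs snd] jl rs_nth_eq[OF i] by (simp add: X_def M_def)
  have "X @ M @ Y = (X @ M) @ Y" by simp
  also have "\<dots> = concat (map snd (take j rs)) @ snd (rs ! j) @ concat (map snd (drop (Suc j) rs))"
    unfolding XM Y_def rs_nth_eq[OF j] by simp
  also have "\<dots> = concat (map snd rs)" using concat_map_nth_split[OF jl, of snd] by (rule sym)
  finally have rs: "concat (map snd rs) = X @ M @ Y" by (rule sym)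
  have pre_conf: "last_conf \<alpha> (concat (map snd (take k rs))) = psrc (pre k)" if k: "k \<in> N" for k
    using last_conf_take_rs[of k] N_subset k rs_nth_eq[OF k] by (auto simp: psrc_def)
  have start: "last_conf \<alpha> X = (fst (psrc (cap i)), snd (psrc (cap i)))"
    using pre_conf[OF i] last_conf_up_cap[OF i] by (simp add: X_def last_conf_append)
  have target: "last_conf \<alpha> (X @ M) = psrc (down j)"
    using pre_conf[OF j] last_conf_up_cap[OF j] by (simp add: XM last_conf_append)
  have "zero_steps (snd (cap i) @ snd (down i) @ snd (suf i)) \<le> zero_steps M"
    by (simp add: M_def)
  then have "zero_steps M > 0" using zero_step_after_cap[OF i] by linarith
  moreover have "valid_steps Tp Tz \<alpha> (X @ M @ Y)" using valid_steps_rs by (simp only: rs)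
  moreover have "end_state (fst (psrc (cap i))) \<pi> = fst (last_conf \<alpha> (X @ M))"
    "int (snd (psrc (cap i))) + eff \<pi> = int (snd (last_conf \<alpha> (X @ M)))"
    using run(2,3) target by simp_all
  ultimately obtain \<rho>' where \<rho>': "is_path Tp Tz \<rho>'" "psrc \<rho>' = \<alpha>"
      "ptgt \<rho>' = last_conf \<alpha> (X @ M @ Y)" "zeros \<rho>' < zeros (\<alpha>, X @ M @ Y)"
    using fewer_zeros_by_pos_run[OF _ run(1) start] by blast
  have "rs \<noteq> []" using jl by auto
  then have "ptgt \<rho>' = \<beta>" using \<rho>'(3) last_conf_rs by (simp add: rs)
  then have "zeros (\<alpha>, concat (map snd rs)) \<le> zeros \<rho>'" using minimal \<rho>'(1,2) by blast
  then show False using \<rho>'(4) by (simp add: rs)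
qed

definition cap_state :: "nat \<Rightarrow> nat \<Rightarrow> 'q" where
  "cap_state i x = end_state (fst (psrc (cap i))) (take x (proj (cap i)))"

definition cap_counter :: "nat \<Rightarrow> nat \<Rightarrow> int" where
  "cap_counter i x = int (snd (psrc (cap i))) + eff (take x (proj (cap i)))"

lemma no_shortcut_between_caps:
  assumes i: "i \<in> N" and j: "j \<in> N" and ij: "i < j"
    and meet: "cap_state i x = cap_state j y"
    and dvd: "gcd (gain (S i)) (loss (T j)) dvd cap_counter i x - cap_counter j y"
  shows False
proof -
  obtain \<pi> where "pos_run Tp (fst (psrc (cap i))) (int (snd (psrc (cap i)))) \<pi>"
      "end_state (fst (psrc (cap i))) \<pi> = fst (psrc (down j))"
      "int (snd (psrc (cap i))) + eff \<pi> = int (snd (psrc (down j)))"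
    using pos_run_splice[OF unit_effects _ _ _ _ _ _ _ _ _ _ _ _ meet[unfolded cap_state_def]
        dvd[unfolded cap_counter_def]]
      sp_cycle_at_cap[OF i] sm_cycle_at_down[OF j] cap_pos_run[OF i] cap_pos_run[OF j]
    by blast
  then show False using no_pos_run_between_caps[OF i j ij] by blast
qed

lemma no_shortcut_within_cap:
  assumes i: "i \<in> N" and xy: "x < y" "y \<le> length (proj (cap i))"
    and meet: "cap_state i x = cap_state i y"
    and dvd: "gcd (gain (S i)) (loss (T i)) dvd cap_counter i y - cap_counter i x"
  shows False
proof -
  define P where "P = proj (cap i)"
  define c where "c = take (y - x) (drop x P)"
  have ty: "take y P = take x P @ c" unfolding c_def using take_add[of x "y - x" P] xy by simp
  have P_eq: "P = take x P @ c @ drop y P" using ty by (metis append.assoc append_take_drop_id)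
  have "pos_run Tp (fst (psrc (cap i))) (int (snd (psrc (cap i)))) (take x P @ c @ drop y P)"
    using cap_pos_run[OF i] P_eq by (simp add: P_def)
  then have run: "pos_run Tp (cap_state i x) (cap_counter i x) c"
    by (simp add: pos_run_append cap_state_def cap_counter_def P_def)
  have "c \<noteq> []" unfolding c_def using xy by (simp add: P_def)
  moreover have "ttgt (last c) = cap_state i x"
    using end_state_eq_ttgt_last[OF \<open>c \<noteq> []\<close>] meet ty by (simp add: cap_state_def end_state_append P_def)
  ultimately have "is_cycle Tp c" using pos_run_imp_consistent[OF run] by (simp add: is_cycle_def)
  moreover have "eff c = cap_counter i y - cap_counter i x" using ty by (simp add: cap_counter_def P_def)
  ultimately show False
    using good_decomp_nth[OF i] P_eq dvd unfolding good_decomp_def Let_def P_def by metis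
qed

lemma cap_points_eq:
  assumes i: "i \<in> N" and j: "j \<in> N"
    and xy: "x < length (proj (cap i))" "y < length (proj (cap j))"
    and meet: "cap_state i x = cap_state j y"
    and gcds: "gcd (gain (S i)) (loss (T j)) dvd m" "gcd (gain (S j)) (loss (T i)) dvd m"
    and dvd: "m dvd cap_counter i x - cap_counter j y"
  shows "i = j \<and> x = y"
proof -
  have ij: "gcd (gain (S i)) (loss (T j)) dvd cap_counter i x - cap_counter j y"
    and ji: "gcd (gain (S j)) (loss (T i)) dvd cap_counter j y - cap_counter i x"
    using dvd_trans[OF gcds(1) dvd] dvd_trans[OF gcds(2) dvd] by (simp_all add: dvd_diff_commute)
  consider "i < j" | "j < i" | "i = j" "x < y" | "i = j" "y < x" | "i = j" "x = y" by linarith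
  then show ?thesis
  proof cases
    case 1
    then show ?thesis using no_shortcut_between_caps[OF i j _ meet ij] by blast
  next
    case 2
    then show ?thesis using no_shortcut_between_caps[OF j i _ meet[symmetric] ji] by blast
  next
    case 3
    have False by (rule no_shortcut_within_cap[OF i \<open>x < y\<close>]) (use xy meet ji 3 in simp_all)
    then show ?thesis ..
  next
    case 4
    have False by (rule no_shortcut_within_cap[OF i \<open>y < x\<close>]) (use xy meet ij 4 in simp_all)
    then show ?thesis ..
  qed simp
qed

lemma cap_state_in_Q:
  assumes i: "i \<in> N"
  shows "cap_state i x \<in> Q"
proof -
  have "hd (sp (S i)) \<in> Tp" using sp_cycle_at_cap[OF i] by (auto simp: is_cycle_def)
  then have "fst (psrc (cap i)) \<in> Q"
    using sp_cycle_at_cap[OF i] trans_in_Q[of "hd (sp (S i))"] by (auto simp: base_def)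
  moreover have "ttgt t \<in> Q" if "t \<in> set (take x (proj (cap i)))" for t
  proof -
    have "set (proj (cap i)) \<subseteq> Tp" using pos_run_imp_consistent[OF cap_pos_run[OF i, THEN conjunct1]] by simp
    then have "t \<in> Tp" using that in_set_takeD by fast
    then show ?thesis using trans_in_Q[of t] by simp
  qed
  ultimately show ?thesis
    using end_state_in[of "fst (psrc (cap i))" "take x (proj (cap i))"] unfolding cap_state_def by auto
qed

lemma sum_cap_length_le:
  assumes I: "I \<subseteq> N" and m: "m > 0"
    and gcd_dvd: "\<And>i j. i \<in> I \<Longrightarrow> j \<in> I \<Longrightarrow> gcd (gain (S i)) (loss (T j)) dvd m"
  shows "(\<Sum>i\<in>I. length (proj (cap i))) \<le> card Q * nat m"
proof -
  define points where "points = Sigma I (\<lambda>i. {..<length (proj (cap i))})"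
  define f where "f = (\<lambda>(i, x). (cap_state i x, cap_counter i x mod m))"
  have "finite I" using I finite_N finite_subset by blast
  then have "(\<Sum>i\<in>I. length (proj (cap i))) = card points" by (simp add: points_def)
  also have "\<dots> = card (f ` points)"
  proof (rule card_image[symmetric], rule inj_onI)
    fix u v assume "u \<in> points" "v \<in> points" "f u = f v"
    moreover obtain i x j y where "u = (i, x)" "v = (j, y)" by fastforce
    ultimately have "i \<in> I" "j \<in> I" "x < length (proj (cap i))" "y < length (proj (cap j))"
      "cap_state i x = cap_state j y" "m dvd cap_counter i x - cap_counter j y"
      by (auto simp: points_def f_def mod_eq_dvd_iff)
    then have "i = j \<and> x = y" using cap_points_eq[of i j x y m] I gcd_dvd by blast
    then show "u = v" using \<open>u = (i, x)\<close> \<open>v = (j, y)\<close> by simp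
  qed
  also have "\<dots> \<le> card (Q \<times> {0..<m})"
    using I m cap_state_in_Q finite_Q by (intro card_mono) (auto simp: points_def f_def)
  also have "\<dots> = card Q * nat m" by (simp add: card_cartesian_product)
  finally show ?thesis .
qed

lemma card_same_SCCs_le:
  assumes "i0 \<in> N" "S i0 = s" "T i0 = t"
  shows "card {i \<in> N. S i = s \<and> T i = t} \<le> nat (gcd (gain s) (loss t))"
proof -
  define I where "I = {i \<in> N. S i = s \<and> T i = t}"
  define g where "g = gcd (gain s) (loss t)"
  have "g > 0" unfolding g_def using sp_props[OF assms(1)] assms by simp
  have "inj_on (\<lambda>i. int (snd (psrc (cap i))) mod g) I"
  proof (rule inj_onI, rule ccontr)
    fix i j assume i: "i \<in> I" and j: "j \<in> I" and "i \<noteq> j"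
      and "int (snd (psrc (cap i))) mod g = int (snd (psrc (cap j))) mod g"
    then have "g dvd cap_counter i 0 - cap_counter j 0" by (simp add: cap_counter_def mod_eq_dvd_iff)
    then have "g dvd cap_counter i 0 - cap_counter j 0" "g dvd cap_counter j 0 - cap_counter i 0"
      by (simp_all only: dvd_diff_commute)
    moreover have "cap_state i 0 = cap_state j 0"
      using i j state_cap_down by (simp add: I_def cap_state_def)
    ultimately show False
      using \<open>i \<noteq> j\<close> i j no_shortcut_between_caps[of i j 0 0] no_shortcut_between_caps[of j i 0 0]
      by (auto simp: I_def g_def neq_iff)
  qed
  then have "card I = card ((\<lambda>i. int (snd (psrc (cap i))) mod g) ` I)" by (simp add: card_image)
  also have "\<dots> \<le> card {0..<g}" using \<open>g > 0\<close> by (intro card_mono) auto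
  finally show ?thesis by (simp add: I_def g_def)
qed

lemma up_repetitions_le: "i \<in> N \<Longrightarrow>
    int (a i) * gain (S i) \<le> 2 * int (length (proj (cap i))) + 2 * lcm (gain (S i)) (loss (T i))"
  using good_decomp_nth[of i] unfolding good_decomp_def Let_def by (simp add: plen_def proj_def)

lemma down_repetitions_le: "i \<in> N \<Longrightarrow>
    int (b i) * loss (T i) \<le> 2 * int (length (proj (cap i))) + 2 * lcm (loss (T i)) (gain (S i))"
  using good_decomp_nth[of i] unfolding good_decomp_def Let_def by (simp add: plen_def proj_def lcm.commute)

lemma plen_up_le:
  assumes i: "i \<in> N"
  shows "plen (up i) \<le> a i * card (S i)"
proof -
  have "plen (up i) = length (proj (up i))" by (simp add: plen_def proj_def)
  also have "\<dots> = a i * length (sp (S i))"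
    using normal_decomp_nth[OF i] by (simp add: normal_decomp_def length_concat sum_list_replicate)
  also have "\<dots> \<le> a i * card (S i)" using length_sp_le[OF i] by simp
  finally show ?thesis .
qed

lemma plen_down_le:
  assumes i: "i \<in> N"
  shows "plen (down i) \<le> b i * card (T i)"
proof -
  have "plen (down i) = length (proj (down i))" by (simp add: plen_def proj_def)
  also have "\<dots> = b i * length (sm (T i))"
    using normal_decomp_nth[OF i] by (simp add: normal_decomp_def length_concat sum_list_replicate)
  also have "\<dots> \<le> b i * card (T i)" using length_sm_le[OF i] by simp
  finally show ?thesis .
qed

lemma sum_a_same_S_le:
  assumes s: "s \<in> S ` N"
  shows "(\<Sum>i\<in>{i \<in> N. S i = s}. a i) \<le> 4 * card Q"
proof -
  define I where "I = {i \<in> N. S i = s}"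
  obtain i0 where i0: "i0 \<in> N" "S i0 = s" using s by auto
  have A: "gain s > 0" using sp_props[OF i0(1)] i0(2) by simp
  have I_N: "I \<subseteq> N" and "finite I" using finite_N by (auto simp: I_def)
  have "(\<Sum>i\<in>I. a i) \<le> 4 * card Q"
  proof (rule sum_repetitions_le[where G = T and B = "\<lambda>t. loss t" and len = "\<lambda>i. length (proj (cap i))",
        OF \<open>finite I\<close> A])
    show "int (a i) * gain s \<le> 2 * int (length (proj (cap i))) + 2 * lcm (gain s) (loss (T i))"
      if "i \<in> I" for i
      using that up_repetitions_le by (auto simp: I_def)
    show "(\<Sum>i\<in>I. length (proj (cap i))) \<le> card Q * nat (gain s)"
      by (rule sum_cap_length_le[OF I_N A]) (auto simp: I_def)
    show "card {i \<in> I. T i = t} \<le> nat (gcd (gain s) (loss t)) \<and> 0 < loss t \<and> loss t \<le> int (card t)"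
      if tI: "t \<in> T ` I" for t
    proof -
      obtain j where j: "j \<in> N" "S j = s" "T j = t" using tI by (auto simp: I_def)
      have "{i \<in> I. T i = t} = {i \<in> N. S i = s \<and> T i = t}" by (auto simp: I_def)
      then show ?thesis using card_same_SCCs_le[OF j] sm_props[OF j(1)] loss_le_card[OF j(1)] j by simp
    qed
    show "(\<Sum>t\<in>T ` I. card t) \<le> card Q"
      using sum_card_SCCs_le[OF finite_Q] SCCs_S_T I_N by blast
  qed
  then show ?thesis by (simp add: I_def)
qed

lemma sum_b_same_T_le:
  assumes t: "t \<in> T ` N"
  shows "(\<Sum>i\<in>{i \<in> N. T i = t}. b i) \<le> 4 * card Q"
proof -
  define I where "I = {i \<in> N. T i = t}"
  obtain i0 where i0: "i0 \<in> N" "T i0 = t" using t by auto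
  have B: "loss t > 0" using sm_props[OF i0(1)] i0(2) by simp
  have I_N: "I \<subseteq> N" and "finite I" using finite_N by (auto simp: I_def)
  have "(\<Sum>i\<in>I. b i) \<le> 4 * card Q"
  proof (rule sum_repetitions_le[where G = S and B = "\<lambda>s. gain s" and len = "\<lambda>i. length (proj (cap i))",
        OF \<open>finite I\<close> B])
    show "int (b i) * loss t \<le> 2 * int (length (proj (cap i))) + 2 * lcm (loss t) (gain (S i))"
      if "i \<in> I" for i
      using that down_repetitions_le by (auto simp: I_def)
    show "(\<Sum>i\<in>I. length (proj (cap i))) \<le> card Q * nat (loss t)"
      by (rule sum_cap_length_le[OF I_N B]) (auto simp: I_def)
    show "card {i \<in> I. S i = s} \<le> nat (gcd (loss t) (gain s)) \<and> 0 < gain s \<and> gain s \<le> int (card s)"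
      if sI: "s \<in> S ` I" for s
    proof -
      obtain j where j: "j \<in> N" "S j = s" "T j = t" using sI by (auto simp: I_def)
      have "{i \<in> I. S i = s} = {i \<in> N. S i = s \<and> T i = t}" by (auto simp: I_def)
      then show ?thesis
        using card_same_SCCs_le[OF j] sp_props[OF j(1)] gain_le_card[OF j(1)] j by (simp add: gcd.commute)
    qed
    show "(\<Sum>s\<in>S ` I. card s) \<le> card Q"
      using sum_card_SCCs_le[OF finite_Q] SCCs_S_T I_N by blast
  qed
  then show ?thesis by (simp add: I_def)
qed

lemma sum_plen_up_le: "(\<Sum>i\<in>N. plen (up i)) \<le> 4 * (card Q)\<^sup>2"
proof -
  have "(\<Sum>i\<in>N. plen (up i)) \<le> card Q * (4 * card Q)"
    using finite_N plen_up_le sum_a_same_S_le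
  proof (rule sum_le_by_groups)
    show "(\<Sum>s\<in>S ` N. card s) \<le> card Q" using sum_card_SCCs_le[OF finite_Q] SCCs_S_T by blast
  qed
  then show ?thesis by (simp add: power2_eq_square)
qed

lemma sum_plen_down_le: "(\<Sum>i\<in>N. plen (down i)) \<le> 4 * (card Q)\<^sup>2"
proof -
  have "(\<Sum>i\<in>N. plen (down i)) \<le> card Q * (4 * card Q)"
    using finite_N plen_down_le sum_b_same_T_le
  proof (rule sum_le_by_groups)
    show "(\<Sum>t\<in>T ` N. card t) \<le> card Q" using sum_card_SCCs_le[OF finite_Q] SCCs_S_T by blast
  qed
  then show ?thesis by (simp add: power2_eq_square)
qed

end

theorem lemma7:
  fixes Q :: "'q set" and Tp Tz :: "'q trans set"
    and sp sm :: "'q set \<Rightarrow> 'q trans list"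
    and \<alpha> \<beta> :: "'q conf" and rs :: "'q path list"
    and L N :: "nat set"
    and S T :: "nat \<Rightarrow> 'q set"
    and pre up cap down suf :: "nat \<Rightarrow> 'q path"
    and a b :: "nat \<Rightarrow> nat"
  assumes "ocs Q Tp Tz"
    and "sigma_ok Q Tp sp sm"
    and "snd \<alpha> = 0" and "snd \<beta> = 0"
    and arcs: "\<forall>i < length rs. is_arc Tp Tz (rs ! i)"
    and chain: "\<forall>i. Suc i < length rs \<longrightarrow> ptgt (rs ! i) = psrc (rs ! Suc i)"
    and ends: "if rs = [] then \<alpha> = \<beta> else psrc (hd rs) = \<alpha> \<and> ptgt (last rs) = \<beta>"
    and minimal: "\<forall>\<rho>'. is_path Tp Tz \<rho>' \<and> psrc \<rho>' = \<alpha> \<and> ptgt \<rho>' = \<beta> \<longrightarrow>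
                    zeros (\<alpha>, concat (map snd rs)) \<le> zeros \<rho>'"
    and part: "L \<inter> N = {}" "L \<union> N = {..<length rs}"
    and lowarcs: "\<forall>i \<in> L. low Q (rs ! i) \<and>
                    (\<forall>\<rho>'. is_arc Tp Tz \<rho>' \<and> low Q \<rho>' \<and> psrc \<rho>' = psrc (rs ! i) \<and> ptgt \<rho>' = ptgt (rs ! i)
                          \<longrightarrow> plen (rs ! i) \<le> plen \<rho>')"
    and normal: "\<forall>i \<in> N. good_decomp Q Tp Tz sp sm (S i) (T i) (rs ! i)
                    (pre i) (up i) (cap i) (down i) (suf i) (a i) (b i)"
  shows "(\<Sum>i\<in>N. plen (up i)) \<le> 4 * (card Q)^2 \<and> (\<Sum>i\<in>N. plen (down i)) \<le> 4 * (card Q)^2"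
proof -
  have "N \<subseteq> {..<length rs}" using part(2) by blast
  then interpret minimal_decomposition Q Tp Tz sp sm \<alpha> \<beta> rs N S T pre up cap down suf a b
    using assms by unfold_locales blast+
  show ?thesis using sum_plen_up_le sum_plen_down_le by simp
qed

end
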